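(* Let $H$ be a $3\times 3$ complex hermitian matrix with $\operatorname{tr}(H)=0$ and $\operatorname{tr}(H^2)=2$, let $I$ be the $3\times3$ identity, and let $s$ be real. Then $1+s^2+is^3\det(H)\neq 0$, $I-isH$ is invertible, and $$\int_0^\infty e^{-t}\exp(itsH)\,dt=(I-isH)^{-1}=\frac{1}{1+s^2+is^3\det(H)}\left((1+s^2)I+isH-s^2H^2\right),$$ and consequently $$(I+isH)(I-isH)^{-1}=\frac{1}{1+s^2+is^3\det(H)}\left(\left(1+s^2-is^3\det(H)\right)I+2isH-2s^2H^2\right).$$
   Context: The matrix exponential is the usual power series; the integral is taken entrywise. *)

theory Defs
  imports "HOL-Analysis.Analysis"
begin

definition cmat_scale :: "complex \<Rightarrow> complex^'n^'m \<Rightarrow> complex^'n^'m" where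
  "cmat_scale c A = (\<chi> i j. c * A $ i $ j)"

fun mat_pow :: "complex^'n^'n \<Rightarrow> nat \<Rightarrow> complex^'n^'n" where
  "mat_pow A 0 = mat 1"
| "mat_pow A (Suc k) = A ** mat_pow A k"

definition mat_exp :: "complex^'n^'n \<Rightarrow> complex^'n^'n" where
  "mat_exp A = (\<Sum>k. cmat_scale (1 / of_nat (fact k)) (mat_pow A k))"

definition hermitian :: "complex^'n^'n \<Rightarrow> bool" where
  "hermitian H \<longleftrightarrow> (\<forall>i j. H $ i $ j = cnj (H $ j $ i))"

end

theory Submission
  imports Defs "HOL-Real_Asymp.Real_Asymp"
begin

(*
  Since tr H = 0 and tr H^2 = 2, Cayley-Hamilton reads H^3 = H + det(H) I. Multiplying out then shows
  that (1 + s^2) I + isH - s^2 H^2 is (1 + s^2 + is^3 det H) times a right inverse of I - isH, and the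
  Cayley transform follows from I + isH = 2I - (I - isH).

  For the integral, H is diagonalised by Lagrange interpolation. Hermiticity forces the annihilating
  cubic to split over the reals (for hermitian K and L, K (L^2 + c I) = 0 with c > 0 implies K = 0),
  and repeated roots can be removed because a hermitian matrix with square 0 vanishes. Writing exp(itsH) as the sum of
  e^(itsl) P_l over the real eigenvalues l, each term integrates against e^(-t) to P_l / (1 - isl), and
  these terms add up to (I - isH)^(-1).
*)

lemma cmat_scale_nth [simp]: "cmat_scale c A $ i $ j = c * A $ i $ j"
  by (simp add: cmat_scale_def)

lemma matrix_mul_cmat_scale_left [simp]: "cmat_scale c A ** B = cmat_scale c (A ** B)"
  by (simp add: vec_eq_iff matrix_matrix_mult_def sum_distrib_left mult.assoc)

lemma matrix_mul_cmat_scale_right [simp]: "A ** cmat_scale c B = cmat_scale c (A ** B)"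
  by (simp add: vec_eq_iff matrix_matrix_mult_def sum_distrib_left algebra_simps)

lemma cmat_scale_add [simp]: "cmat_scale c (A + B) = cmat_scale c A + cmat_scale c B"
  by (simp add: vec_eq_iff algebra_simps)

lemma cmat_scale_diff [simp]: "cmat_scale c (A - B) = cmat_scale c A - cmat_scale c B"
  by (simp add: vec_eq_iff algebra_simps)

lemma cmat_scale_cmat_scale [simp]: "cmat_scale a (cmat_scale b A) = cmat_scale (a * b) A"
  by (simp add: vec_eq_iff)

lemma cmat_scale_one [simp]: "cmat_scale 1 A = A"
  by (simp add: vec_eq_iff)

lemma cmat_scale_zero [simp]: "cmat_scale 0 A = 0" "cmat_scale c 0 = 0"
  by (simp_all add: vec_eq_iff)

lemma cmat_scale_sum_right: "cmat_scale c (\<Sum>x\<in>S. f x) = (\<Sum>x\<in>S. cmat_scale c (f x))"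
  by (induction S rule: infinite_finite_induct) simp_all

lemma cmat_scale_sum_left: "cmat_scale (\<Sum>x\<in>S. f x) A = (\<Sum>x\<in>S. cmat_scale (f x) A)"
  by (induction S rule: infinite_finite_induct) (simp_all add: vec_eq_iff distrib_right)

lemma matrix_add_rdistrib: "((A :: 'a::semiring_1^'n^'m) + B) ** C = A ** C + B ** C"
  by (simp add: vec_eq_iff matrix_matrix_mult_def algebra_simps sum.distrib)

lemma matrix_diff_rdistrib: "((A :: 'a::ring_1^'n^'m) - B) ** C = A ** C - B ** C"
  by (simp add: vec_eq_iff matrix_matrix_mult_def algebra_simps sum_subtractf)

lemma matrix_diff_ldistrib: "(C :: 'a::ring_1^'n^'m) ** (A - B) = C ** A - C ** B"
  by (simp add: vec_eq_iff matrix_matrix_mult_def algebra_simps sum_subtractf)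

lemmas matrix_ring_simps = matrix_add_ldistrib matrix_add_rdistrib matrix_diff_ldistrib
  matrix_diff_rdistrib matrix_mul_assoc[symmetric]

lemma matrix_mul_sum_right: "A ** (\<Sum>x\<in>S. f x) = (\<Sum>x\<in>S. A ** f x)"
  by (induction S rule: infinite_finite_induct) (simp_all add: matrix_add_ldistrib)

lemma matrix_inv_eq_right_inverse:
  fixes A X :: "'a::field^'n^'n"
  assumes AX: "A ** X = mat 1"
  shows "invertible A" "matrix_inv A = X"
proof -
  have XA: "X ** A = mat 1"
    using AX matrix_left_right_inverse by blast
  then show "invertible A"
    using AX invertible_def by blast
  have inv: "A ** matrix_inv A = mat 1 \<and> matrix_inv A ** A = mat 1"
    unfolding matrix_inv_def by (rule someI[of _ X]) (use AX XA in simp)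
  then have "matrix_inv A = matrix_inv A ** (A ** X)"
    using AX by simp
  also have "\<dots> = X"
    using inv by (simp add: matrix_mul_assoc)
  finally show "matrix_inv A = X" .
qed

lemma cayley_transform_of_right_inverse:
  fixes B R :: "complex^'n^'n"
  assumes inv: "(mat 1 - B) ** cmat_scale (1 / D) R = mat 1" and "D \<noteq> 0"
  shows "(mat 1 + B) ** cmat_scale (1 / D) R = cmat_scale (1 / D) (cmat_scale 2 R - cmat_scale D (mat 1))"
proof -
  let ?X = "cmat_scale (1 / D) R"
  have "mat 1 + B = cmat_scale 2 (mat 1) - (mat 1 - B)"
    by (simp add: vec_eq_iff)
  then have "(mat 1 + B) ** ?X = cmat_scale 2 (mat 1) ** ?X - (mat 1 - B) ** ?X"
    by (simp only: matrix_diff_rdistrib)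
  then have "(mat 1 + B) ** ?X = cmat_scale 2 ?X - mat 1"
    using inv by simp
  then show ?thesis
    using \<open>D \<noteq> 0\<close> by (simp add: vec_eq_iff field_simps)
qed

abbreviation mat_shift :: "complex^'n^'n \<Rightarrow> complex \<Rightarrow> complex^'n^'n" where
  "mat_shift H a \<equiv> H - cmat_scale a (mat 1)"

lemma mat_shift_mult:
  "mat_shift H a ** mat_shift H b = H ** H - cmat_scale (a + b) H + cmat_scale (a * b) (mat 1)"
  by (simp add: matrix_ring_simps vec_eq_iff algebra_simps)

lemma mat_shift_commute: "mat_shift H a ** mat_shift H b = mat_shift H b ** mat_shift H a"
  by (simp add: mat_shift_mult add.commute mult.commute)

lemma mat_shift_mult_eq_0_iff: "mat_shift H l ** P = 0 \<longleftrightarrow> H ** P = cmat_scale l P"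
  by (simp add: matrix_diff_rdistrib)

lemma mat_shift_mult_monic_quadratic:
  "mat_shift H a ** (H ** H + cmat_scale b H + cmat_scale c (mat 1))
     = H ** (H ** H) + cmat_scale (b - a) (H ** H) + cmat_scale (c - a * b) H - cmat_scale (a * c) (mat 1)"
  by (simp add: matrix_ring_simps vec_eq_iff algebra_simps)

lemma depressed_cubic_resolvent_inverse:
  assumes cubic: "A ** (A ** A) = cmat_scale p A + cmat_scale q (mat 1)"
    and nz: "1 - p * y\<^sup>2 - q * y ^ 3 \<noteq> 0"
  shows "(mat 1 - cmat_scale y A) ** cmat_scale (1 / (1 - p * y\<^sup>2 - q * y ^ 3))
      (cmat_scale (1 - p * y\<^sup>2) (mat 1) + cmat_scale y A + cmat_scale (y\<^sup>2) (A ** A)) = mat 1"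
proof -
  have "(mat 1 - cmat_scale y A) ** (cmat_scale (1 - p * y\<^sup>2) (mat 1) + cmat_scale y A + cmat_scale (y\<^sup>2) (A ** A))
      = cmat_scale (1 - p * y\<^sup>2 - q * y ^ 3) (mat 1)"
    using cubic by (simp add: matrix_ring_simps vec_eq_iff algebra_simps power2_eq_square power3_eq_cube)
  moreover have "1 / (1 - p * y\<^sup>2 - q * y ^ 3) * (1 - p * y\<^sup>2 - q * y ^ 3) = 1"
    unfolding divide_inverse mult_1_left by (rule left_inverse[OF nz])
  ultimately show ?thesis
    by (simp only: matrix_mul_cmat_scale_right cmat_scale_cmat_scale cmat_scale_one)
qed

definition conj_transpose :: "complex^'n^'m \<Rightarrow> complex^'m^'n" where
  "conj_transpose A = (\<chi> i j. cnj (A $ j $ i))"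

lemma conj_transpose_nth [simp]: "conj_transpose A $ i $ j = cnj (A $ j $ i)"
  by (simp add: conj_transpose_def)

lemma conj_transpose_mult: "conj_transpose (A ** B) = conj_transpose B ** conj_transpose A"
  by (simp add: vec_eq_iff matrix_matrix_mult_def mult.commute)

lemma hermitian_iff_conj_transpose: "hermitian H \<longleftrightarrow> conj_transpose H = H"
  unfolding hermitian_def vec_eq_iff conj_transpose_nth by (metis complex_cnj_cnj)

lemma hermitian_mat_shift:
  assumes "hermitian H"
  shows "hermitian (mat_shift H (of_real a))"
  unfolding hermitian_def
proof (intro allI)
  fix i j
  have "H $ i $ j = cnj (H $ j $ i)"
    using assms hermitian_def by blast
  then show "mat_shift H (of_real a) $ i $ j = cnj (mat_shift H (of_real a) $ j $ i)"
    by (simp add: mat_def)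
qed

lemma hermitian_mult_commuting:
  assumes "hermitian A" "hermitian B" "A ** B = B ** A"
  shows "hermitian (A ** B)"
  using assms by (simp add: hermitian_iff_conj_transpose conj_transpose_mult)

lemma diag_conj_transpose_mult_self:
  "(conj_transpose Z ** Z) $ i $ i = of_real (\<Sum>k\<in>UNIV. (cmod (Z $ k $ i))\<^sup>2)"
proof -
  have "cnj z * z = of_real ((cmod z)\<^sup>2)" for z :: complex
    by (metis complex_norm_square mult.commute)
  then show ?thesis
    unfolding matrix_matrix_mult_def of_real_sum by (simp only: conj_transpose_nth vec_lambda_beta)
qed

lemma conj_transpose_mult_self_add_eq_0:
  assumes sum0: "conj_transpose Z ** Z + cmat_scale (of_real c) (conj_transpose W ** W) = 0"
    and "c > 0"
  shows "W = 0"
proof -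
  have "cmod (W $ k $ i) = 0" for k i
  proof -
    define z w where "z = (\<Sum>k\<in>UNIV. (cmod (Z $ k $ i))\<^sup>2)" and "w = (\<Sum>k\<in>UNIV. (cmod (W $ k $ i))\<^sup>2)"
    have "of_real z + of_real c * of_real w = (0::complex)"
      using arg_cong[OF sum0, of "\<lambda>A. A $ i $ i"]
      unfolding z_def w_def by (simp only: vector_add_component cmat_scale_nth diag_conj_transpose_mult_self zero_index)
    then have "z + c * w = 0"
      by (metis of_real_add of_real_mult of_real_eq_0_iff)
    moreover have "0 \<le> z" "0 \<le> w"
      unfolding z_def w_def by (simp_all add: sum_nonneg)
    ultimately have "w = 0"
      using \<open>c > 0\<close> by (metis add_nonneg_eq_0_iff mult_eq_0_iff mult_nonneg_nonneg order_less_imp_le order_less_irrefl)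
    then show ?thesis
      unfolding w_def by (simp add: sum_nonneg_eq_0_iff)
  qed
  then show ?thesis
    by (simp add: vec_eq_iff)
qed

lemma hermitian_square_eq_0:
  assumes "hermitian N" "N ** N = 0"
  shows "N = 0"
proof (rule conj_transpose_mult_self_add_eq_0)
  show "conj_transpose 0 ** 0 + cmat_scale (of_real 1) (conj_transpose N ** N) = 0"
    using assms by (simp add: hermitian_iff_conj_transpose)
qed simp

lemma hermitian_mult_square_add_pos_eq_0:
  assumes K: "hermitian K" and L: "hermitian L" and "c > 0"
    and KL: "K ** (L ** L + cmat_scale (of_real c) (mat 1)) = 0"
  shows "K = 0"
proof (rule conj_transpose_mult_self_add_eq_0)
  have "conj_transpose (L ** K) ** (L ** K) + cmat_scale (of_real c) (conj_transpose K ** K)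
      = K ** (L ** L + cmat_scale (of_real c) (mat 1)) ** K"
    using K L by (simp add: hermitian_iff_conj_transpose conj_transpose_mult matrix_ring_simps)
  then show "conj_transpose (L ** K) ** (L ** K) + cmat_scale (of_real c) (conj_transpose K ** K) = 0"
    using KL by simp
qed (fact \<open>c > 0\<close>)

lemma hermitian_commuting_square_mult_eq_0:
  assumes K: "hermitian K" and M: "hermitian M" and comm: "K ** M = M ** K"
    and KKM: "K ** K ** M = 0"
  shows "K ** M = 0"
proof (rule hermitian_square_eq_0)
  show "hermitian (K ** M)"
    using K M comm by (rule hermitian_mult_commuting)
  have "K ** M ** (K ** M) = K ** K ** M ** M"
    using comm by (metis matrix_mul_assoc)
  then show "K ** M ** (K ** M) = 0"
    using KKM by simp
qed

lemma cnj_det: "cnj (det A) = det (\<chi> i j. cnj (A $ i $ j))"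
  by (simp add: det_def)

lemma hermitian_det_real:
  assumes "hermitian H"
  shows "det H \<in> \<real>"
proof -
  have "cnj (H $ i $ j) = H $ j $ i" for i j
    using assms unfolding hermitian_def by (metis complex_cnj_cnj)
  then have "(\<chi> i j. cnj (H $ i $ j)) = transpose H"
    by (simp add: transpose_def)
  then have "cnj (det H) = det H"
    by (simp add: cnj_det det_transpose)
  then show ?thesis
    by (simp add: Reals_cnj_iff)
qed

lemma cayley_hamilton_traceless_3:
  fixes H :: "complex^3^3"
  assumes "trace H = 0"
  shows "H ** (H ** H) = cmat_scale (trace (H ** H) / 2) H + cmat_scale (det H) (mat 1)"
proof -
  have H33: "H$3$3 = - H$1$1 - H$2$2"
    using assms by (simp add: trace_def sum_3 eq_neg_iff_add_eq_0 algebra_simps)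
  show ?thesis
    unfolding vec_eq_iff forall_3
    by (simp add: matrix_matrix_mult_def sum_3 mat_def det_3 trace_def H33 field_simps)
qed

lemma depressed_cubic_real_root:
  fixes p q :: real
  obtains r where "r ^ 3 - p * r = q"
proof -
  define R where "R = \<bar>p\<bar> + \<bar>q\<bar> + 1"
  have R: "R \<ge> 1"
    unfolding R_def by simp
  then have "R * R \<ge> 1 * R"
    by (intro mult_right_mono) auto
  then have R2: "R * R \<ge> R"
    by simp
  have "R ^ 3 - p * R \<ge> R * (R * R - \<bar>p\<bar>)"
    using R by (simp add: power3_eq_cube algebra_simps mult_right_mono abs_ge_self)
  also have "R * (R * R - \<bar>p\<bar>) \<ge> 1 * (\<bar>q\<bar> + 1)"
    using R R2 by (intro mult_mono) (auto simp: R_def)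
  finally have R_large: "R ^ 3 - p * R \<ge> \<bar>q\<bar>"
    by simp
  have "(-R) ^ 3 - p * (-R) \<le> q" "q \<le> R ^ 3 - p * R"
    using R_large by (simp_all add: power3_eq_cube)
  moreover have "continuous_on {-R..R} (\<lambda>x. x ^ 3 - p * x)"
    by (intro continuous_intros)
  ultimately obtain r where "r ^ 3 - p * r = q"
    using IVT'[of "\<lambda>x. x ^ 3 - p * x" "-R" q R] R by auto
  then show thesis ..
qed

lemma depressed_cubic_mat_shift_factor:
  assumes cubic: "H ** (H ** H) = cmat_scale (of_real p) H + cmat_scale (of_real q) (mat 1)"
    and r: "r ^ 3 - p * r = q"
  shows "mat_shift H (of_real r) ** (H ** H + cmat_scale (of_real r) H + cmat_scale (of_real (r\<^sup>2 - p)) (mat 1)) = 0"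
proof -
  have q: "complex_of_real q = of_real r ^ 3 - of_real p * of_real r"
    using r by (metis of_real_diff of_real_mult of_real_power)
  show ?thesis
    unfolding mat_shift_mult_monic_quadratic cubic
    by (simp add: q vec_eq_iff algebra_simps power2_eq_square power3_eq_cube)
qed

lemma hermitian_depressed_cubic_real_roots:
  assumes herm: "hermitian H"
    and cubic: "H ** (H ** H) = cmat_scale (of_real p) H + cmat_scale (of_real q) (mat 1)"
  obtains a b c :: real
  where "mat_shift H (of_real a) ** mat_shift H (of_real b) ** mat_shift H (of_real c) = 0"
proof -
  obtain r where "r ^ 3 - p * r = q"
    by (rule depressed_cubic_real_root)
  let ?K = "mat_shift H (of_real r)"
  let ?Q = "H ** H + cmat_scale (of_real r) H + cmat_scale (of_real (r\<^sup>2 - p)) (mat 1)"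
  have factor: "?K ** ?Q = 0"
    using cubic \<open>r ^ 3 - p * r = q\<close> by (rule depressed_cubic_mat_shift_factor)
  (* the quadratic factor is (x + r/2)^2 + (3 r^2/4 - p) *)
  show thesis
  proof (cases "p < 3 * r\<^sup>2 / 4")
    case True
    let ?L = "mat_shift H (of_real (- r / 2))"
    have "?L ** ?L + cmat_scale (of_real (3 * r\<^sup>2 / 4 - p)) (mat 1) = ?Q"
      by (simp add: mat_shift_mult vec_eq_iff algebra_simps power2_eq_square)
    then have KL: "?K ** (?L ** ?L + cmat_scale (of_real (3 * r\<^sup>2 / 4 - p)) (mat 1)) = 0"
      using factor by simp
    have "0 < 3 * r\<^sup>2 / 4 - p"
      using True by simp
    then have "?K = 0"
      by (rule hermitian_mult_square_add_pos_eq_0[OF hermitian_mat_shift[OF herm] hermitian_mat_shift[OF herm] _ KL])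
    then show thesis
      using that[of r r r] by simp
  next
    case False
    define d where "d = sqrt (p - 3 * r\<^sup>2 / 4)"
    have "d * d = p - 3 * r\<^sup>2 / 4"
      using False unfolding d_def by simp
    then have "(- r / 2 + d) * (- r / 2 - d) = r\<^sup>2 - p"
      by (simp add: algebra_simps power2_eq_square)
    then have prod: "complex_of_real (- r / 2 + d) * of_real (- r / 2 - d) = of_real (r\<^sup>2 - p)"
      by (metis of_real_mult)
    have sum: "complex_of_real (- r / 2 + d) + of_real (- r / 2 - d) = - of_real r"
      by simp
    have "mat_shift H (of_real (- r / 2 + d)) ** mat_shift H (of_real (- r / 2 - d)) = ?Q"
      unfolding mat_shift_mult sum prod by (simp add: vec_eq_iff)
    then have "?K ** (mat_shift H (of_real (- r / 2 + d)) ** mat_shift H (of_real (- r / 2 - d))) = 0"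
      using factor by (simp only:)
    then show thesis
      by (intro that) (simp only: matrix_mul_assoc)
  qed
qed

lemma hermitian_quadratic_distinct_real_roots:
  assumes herm: "hermitian H"
    and xy: "mat_shift H (of_real x) ** mat_shift H (of_real y) = 0"
  obtains l1 l2 l3 :: real
  where "l1 \<noteq> l2" "l1 \<noteq> l3" "l2 \<noteq> l3"
    "mat_shift H (of_real l1) ** mat_shift H (of_real l2) ** mat_shift H (of_real l3) = 0"
proof (cases "x = y")
  case True
  then have "mat_shift H (of_real x) = 0"
    using xy hermitian_square_eq_0 hermitian_mat_shift[OF herm] by metis
  then show thesis
    by (intro that[of x "x + 1" "x + 2"]) simp_all
next
  case False
  define z where "z = \<bar>x\<bar> + \<bar>y\<bar> + 1"
  have "x \<noteq> z" "y \<noteq> z"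
    unfolding z_def by linarith+
  then show thesis
    using that[of x y z] xy False by simp
qed

lemma hermitian_distinct_real_roots:
  assumes herm: "hermitian H"
    and abc: "mat_shift H (of_real a) ** mat_shift H (of_real b) ** mat_shift H (of_real c) = 0"
  obtains l1 l2 l3 :: real
  where "l1 \<noteq> l2" "l1 \<noteq> l3" "l2 \<noteq> l3"
    "mat_shift H (of_real l1) ** mat_shift H (of_real l2) ** mat_shift H (of_real l3) = 0"
proof -
  note result = that
  let ?S = "\<lambda>x::real. mat_shift H (of_real x)"
  have repeated: thesis if "?S x ** ?S x ** ?S y = 0" for x y
  proof -
    have "?S x ** ?S y = 0"
      using hermitian_mat_shift[OF herm] mat_shift_commute that
      by (rule hermitian_commuting_square_mult_eq_0[OF hermitian_mat_shift[OF herm]])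
    then show thesis
      by (rule hermitian_quadratic_distinct_real_roots[OF herm _ result])
  qed
  consider "a \<noteq> b" "a \<noteq> c" "b \<noteq> c" | "a = b" | "a = c" | "b = c"
    by blast
  then show thesis
  proof cases
    case 1
    then show thesis
      using result abc by blast
  next
    case 2
    then show thesis
      using repeated[of a c] abc by simp
  next
    case 3
    then have "?S a ** ?S a ** ?S b = 0"
      using abc by (metis matrix_mul_assoc mat_shift_commute)
    then show thesis
      by (rule repeated)
  next
    case 4
    then have "?S b ** ?S b ** ?S a = 0"
      using abc by (metis matrix_mul_assoc mat_shift_commute)
    then show thesis
      by (rule repeated)
  qed
qed

(* The P l need not be orthogonal projections: only the resolution of the identity and the
   eigen-equations are used. *)
definition eigen_resolution :: "complex^'n^'n \<Rightarrow> complex set \<Rightarrow> (complex \<Rightarrow> complex^'n^'n) \<Rightarrow> bool"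
  where "eigen_resolution H S P \<longleftrightarrow>
    finite S \<and> (\<Sum>l\<in>S. P l) = mat 1 \<and> (\<forall>l\<in>S. H ** P l = cmat_scale l (P l))"

(* The leading coefficients of the Lagrange basis polynomials for the nodes l1, l2, l3;
   the identities say that the basis polynomials sum to 1. *)
lemma lagrange_coefficients:
  fixes l1 l2 l3 :: complex
  assumes "l1 \<noteq> l2" "l1 \<noteq> l3" "l2 \<noteq> l3"
  defines "c1 \<equiv> 1 / ((l1 - l2) * (l1 - l3))"
    and "c2 \<equiv> 1 / ((l2 - l1) * (l2 - l3))"
    and "c3 \<equiv> 1 / ((l3 - l1) * (l3 - l2))"
  shows "c1 + c2 + c3 = 0"
    and "c1 * (l2 + l3) + c2 * (l1 + l3) + c3 * (l1 + l2) = 0"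
    and "c1 * (l2 * l3) + c2 * (l1 * l3) + c3 * (l1 * l2) = 1"
proof -
  have nz: "l1 - l2 \<noteq> 0" "l1 - l3 \<noteq> 0" "l2 - l1 \<noteq> 0" "l2 - l3 \<noteq> 0" "l3 - l1 \<noteq> 0" "l3 - l2 \<noteq> 0"
    using assms by auto
  show "c1 + c2 + c3 = 0"
    unfolding c1_def c2_def c3_def by (simp add: nz divide_simps) (use assms in \<open>simp add: algebra_simps\<close>)
  show "c1 * (l2 + l3) + c2 * (l1 + l3) + c3 * (l1 + l2) = 0"
    unfolding c1_def c2_def c3_def by (simp add: nz divide_simps) (use assms in \<open>simp add: algebra_simps\<close>)
  show "c1 * (l2 * l3) + c2 * (l1 * l3) + c3 * (l1 * l2) = 1"
    unfolding c1_def c2_def c3_def by (simp add: nz divide_simps) (use assms in \<open>simp add: algebra_simps\<close>)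
qed

lemma eigen_resolution_of_distinct_roots:
  assumes distinct: "l1 \<noteq> l2" "l1 \<noteq> l3" "l2 \<noteq> l3"
    and roots: "mat_shift H l1 ** mat_shift H l2 ** mat_shift H l3 = 0"
  obtains P where "eigen_resolution H {l1, l2, l3} P"
proof -
  define c1 c2 c3 where "c1 = 1 / ((l1 - l2) * (l1 - l3))"
    and "c2 = 1 / ((l2 - l1) * (l2 - l3))" and "c3 = 1 / ((l3 - l1) * (l3 - l2))"
  define P1 P2 P3 where "P1 = cmat_scale c1 (mat_shift H l2 ** mat_shift H l3)"
    and "P2 = cmat_scale c2 (mat_shift H l1 ** mat_shift H l3)"
    and "P3 = cmat_scale c3 (mat_shift H l1 ** mat_shift H l2)"
  define P where "P l = (if l = l1 then P1 else if l = l2 then P2 else P3)" for l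
  have "P1 + P2 + P3 = cmat_scale (c1 + c2 + c3) (H ** H)
      - cmat_scale (c1 * (l2 + l3) + c2 * (l1 + l3) + c3 * (l1 + l2)) H
      + cmat_scale (c1 * (l2 * l3) + c2 * (l1 * l3) + c3 * (l1 * l2)) (mat 1)"
    unfolding P1_def P2_def P3_def mat_shift_mult by (simp add: vec_eq_iff algebra_simps)
  then have sum: "P1 + P2 + P3 = mat 1"
    using lagrange_coefficients[OF distinct] unfolding c1_def c2_def c3_def by simp
  have "mat_shift H l1 ** P1 = 0" "mat_shift H l2 ** P2 = 0" "mat_shift H l3 ** P3 = 0"
    unfolding P1_def P2_def P3_def matrix_mul_cmat_scale_right
    using roots by (metis cmat_scale_zero(2) matrix_mul_assoc mat_shift_commute)+
  then have "eigen_resolution H {l1, l2, l3} P"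
    using distinct sum unfolding eigen_resolution_def P_def mat_shift_mult_eq_0_iff
    by (simp add: add.assoc)
  then show thesis ..
qed

lemma hermitian_depressed_cubic_eigen_resolution:
  assumes herm: "hermitian H"
    and cubic: "H ** (H ** H) = cmat_scale (of_real p) H + cmat_scale (of_real q) (mat 1)"
  obtains S P where "eigen_resolution H S P" "S \<subseteq> \<real>"
proof -
  obtain a b c :: real
    where "mat_shift H (of_real a) ** mat_shift H (of_real b) ** mat_shift H (of_real c) = 0"
    using hermitian_depressed_cubic_real_roots[OF herm cubic] .
  then obtain l1 l2 l3 :: real where "l1 \<noteq> l2" "l1 \<noteq> l3" "l2 \<noteq> l3"
    "mat_shift H (of_real l1) ** mat_shift H (of_real l2) ** mat_shift H (of_real l3) = 0"
    using hermitian_distinct_real_roots[OF herm] by metis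
  then obtain P where "eigen_resolution H {of_real l1, of_real l2, of_real l3} P"
    by (metis eigen_resolution_of_distinct_roots of_real_eq_iff)
  then show thesis
    by (rule that) auto
qed

lemma sums_cmat_scale:
  assumes "f sums s"
  shows "(\<lambda>n. cmat_scale (f n) A) sums cmat_scale s A"
  unfolding sums_def cmat_scale_sum_left[symmetric]
proof (intro vec_tendstoI)
  fix i j
  show "((\<lambda>n. cmat_scale (\<Sum>k<n. f k) A $ i $ j) \<longlongrightarrow> cmat_scale s A $ i $ j) sequentially"
    using assms unfolding sums_def by (simp add: tendsto_mult_right)
qed

lemma exp_sums_fact: "(\<lambda>n. 1 / of_nat (fact n) * z ^ n) sums exp (z :: complex)"
proof -
  have "z ^ n /\<^sub>R fact n = 1 / of_nat (fact n) * z ^ n" for n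
    by (simp add: scaleR_conv_of_real divide_simps)
  then show ?thesis
    using exp_converges[of z] by simp
qed

lemma mat_exp_eigen_resolution:
  assumes "eigen_resolution H S P"
  shows "mat_exp (cmat_scale z H) = (\<Sum>l\<in>S. cmat_scale (exp (z * l)) (P l))"
proof -
  have sum1: "(\<Sum>l\<in>S. P l) = mat 1" and eig: "\<And>l. l \<in> S \<Longrightarrow> H ** P l = cmat_scale l (P l)"
    using assms unfolding eigen_resolution_def by auto
  have pow: "mat_pow (cmat_scale z H) n = (\<Sum>l\<in>S. cmat_scale ((z * l) ^ n) (P l))" for n
  proof (induction n)
    case 0
    then show ?case
      using sum1 by simp
  next
    case (Suc n)
    have "mat_pow (cmat_scale z H) (Suc n) = (\<Sum>l\<in>S. cmat_scale (z * (z * l) ^ n) (H ** P l))"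
      by (simp add: Suc.IH matrix_mul_sum_right mult.commute)
    also have "\<dots> = (\<Sum>l\<in>S. cmat_scale ((z * l) ^ Suc n) (P l))"
      using eig by (intro sum.cong) (simp_all add: algebra_simps)
    finally show ?case .
  qed
  have "(\<lambda>n. cmat_scale (1 / of_nat (fact n)) (mat_pow (cmat_scale z H) n))
      sums (\<Sum>l\<in>S. cmat_scale (exp (z * l)) (P l))"
    unfolding pow cmat_scale_sum_right cmat_scale_cmat_scale
    by (intro sums_sum sums_cmat_scale exp_sums_fact)
  then show ?thesis
    unfolding mat_exp_def by (rule sums_unique[symmetric])
qed

lemma cexp_absolutely_integrable_to_infinity:
  assumes "Re z < 0"
  shows "set_integrable lebesgue {0..} (\<lambda>t::real. exp (of_real t * z))"
proof (rule measurable_bounded_by_integrable_imp_absolutely_integrable)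
  show "(\<lambda>t::real. exp (of_real t * z)) \<in> borel_measurable (lebesgue_on {0..})"
    by (intro continuous_imp_measurable_on_sets_lebesgue continuous_intros) auto
  show "(\<lambda>t. exp (- (- Re z) * t)) integrable_on {0..}"
    using assms by (intro integrable_on_exp_minus_to_infinity) simp
next
  show "norm (exp (of_real t * z)) \<le> exp (- (- Re z) * t)" for t :: real
    by (simp add: norm_exp_eq_Re)
qed auto

lemma has_integral_cexp_to_infinity:
  assumes z: "Re z < 0"
  shows "((\<lambda>t::real. exp (of_real t * z)) has_integral - 1 / z) {0..}"
proof -
  define f F where "f t = exp (of_real t * z)" and "F t = exp (of_real t * z) / z" for t :: real
  have int: "set_integrable lebesgue {0..} f"
    unfolding f_def using z by (rule cexp_absolutely_integrable_to_infinity)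
  have deriv: "(F has_vector_derivative f t) (at t within {0..b})" for t b
  proof -
    have "((\<lambda>w. exp (w * z) / z) has_field_derivative exp (of_real t * z)) (at (of_real t))"
      using z by (auto intro!: derivative_eq_intros)
    then show ?thesis
      unfolding f_def F_def by (rule has_vector_derivative_real_field)
  qed
  have partial: "set_lebesgue_integral lebesgue {0..b} f = F b - F 0" if "b \<ge> 0" for b
  proof -
    have "set_integrable lebesgue {0..b} f"
      by (rule set_integrable_subset[OF int]) auto
    then show ?thesis
      using fundamental_theorem_of_calculus[OF that deriv]
      by (simp add: set_lebesgue_integral_eq_integral integral_unique)
  qed
  have "((\<lambda>b. norm (F b)) \<longlongrightarrow> 0) at_top"
  proof -
    define a where "a = - Re z"
    have "a > 0"
      using z unfolding a_def by simp
    then have "((\<lambda>b. exp (- a * b)) \<longlongrightarrow> 0) at_top"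
      by real_asymp
    then have "((\<lambda>b. exp (- a * b) / cmod z) \<longlongrightarrow> 0) at_top"
      by (rule tendsto_divide_zero)
    moreover have "norm (F b) = exp (- a * b) / cmod z" for b
      unfolding F_def a_def by (simp add: norm_divide norm_exp_eq_Re)
    ultimately show ?thesis
      by simp
  qed
  then have "(F \<longlongrightarrow> 0) at_top"
    by (rule tendsto_norm_zero_cancel)
  then have "((\<lambda>b. F b - F 0) \<longlongrightarrow> 0 - F 0) at_top"
    by (intro tendsto_diff tendsto_const)
  moreover have "\<forall>\<^sub>F b in at_top. F b - F 0 = set_lebesgue_integral lebesgue {0..b} f"
    using eventually_ge_at_top[of "0::real"] by eventually_elim (simp add: partial)
  ultimately have lim: "((\<lambda>b. set_lebesgue_integral lebesgue {0..b} f) \<longlongrightarrow> 0 - F 0) at_top"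
    by (rule Lim_transform_eventually)
  have "((\<lambda>b. set_lebesgue_integral lebesgue {0..b} f) \<longlongrightarrow> set_lebesgue_integral lebesgue {0..} f) at_top"
    by (rule tendsto_set_lebesgue_integral_at_top[OF _ int]) auto
  then have "set_lebesgue_integral lebesgue {0..} f = 0 - F 0"
    using lim by (rule tendsto_unique[OF trivial_limit_at_top_linorder])
  then show ?thesis
    using has_integral_set_lebesgue[OF int] unfolding f_def F_def by simp
qed

lemma eigen_resolution_resolvent:
  assumes res: "eigen_resolution H S P" and nz: "\<And>l. l \<in> S \<Longrightarrow> 1 - y * l \<noteq> 0"
  shows "matrix_inv (mat 1 - cmat_scale y H) = (\<Sum>l\<in>S. cmat_scale (1 / (1 - y * l)) (P l))"
proof (rule matrix_inv_eq_right_inverse)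
  have sum1: "(\<Sum>l\<in>S. P l) = mat 1" and eig: "\<And>l. l \<in> S \<Longrightarrow> H ** P l = cmat_scale l (P l)"
    using res unfolding eigen_resolution_def by auto
  have "(mat 1 - cmat_scale y H) ** (\<Sum>l\<in>S. cmat_scale (1 / (1 - y * l)) (P l)) = (\<Sum>l\<in>S. P l)"
    unfolding matrix_mul_sum_right
  proof (rule sum.cong)
    fix l
    assume l: "l \<in> S"
    then have "(mat 1 - cmat_scale y H) ** P l = cmat_scale (1 - y * l) (P l)"
      using eig by (simp add: matrix_diff_rdistrib vec_eq_iff algebra_simps)
    then show "(mat 1 - cmat_scale y H) ** cmat_scale (1 / (1 - y * l)) (P l) = P l"
      using nz[OF l] by simp
  qed simp
  then show "(mat 1 - cmat_scale y H) ** (\<Sum>l\<in>S. cmat_scale (1 / (1 - y * l)) (P l)) = mat 1"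
    using sum1 by simp
qed

lemma laplace_mat_exp_resolvent:
  fixes H :: "complex^'n^'n" and s :: real
  assumes res: "eigen_resolution H S P" and real: "S \<subseteq> \<real>"
  shows "((\<lambda>t. complex_of_real (exp (- t)) * mat_exp (cmat_scale (\<i> * complex_of_real (t * s)) H) $ i $ j)
      has_integral matrix_inv (mat 1 - cmat_scale (\<i> * complex_of_real s) H) $ i $ j) {0..}"
proof -
  let ?y = "\<i> * complex_of_real s"
  have fin: "finite S"
    using res unfolding eigen_resolution_def by auto
  have Re: "Re (?y * l) = 0" if "l \<in> S" for l
    using real that by (auto elim!: Reals_cases)
  then have decay: "Re (- 1 + ?y * l) < 0" and nz: "1 - ?y * l \<noteq> 0" if "l \<in> S" for l
  proof -
    have "Re (- 1 + ?y * l) = - 1" and Re1: "Re (1 - ?y * l) = 1"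
      using Re[OF that] by (simp_all only: plus_complex.sel minus_complex.sel one_complex.sel uminus_complex.sel)
    then show "Re (- 1 + ?y * l) < 0"
      by linarith
    show "1 - ?y * l \<noteq> 0"
      using Re1 by (metis zero_complex.sel(1) zero_neq_one)
  qed
  have inv: "matrix_inv (mat 1 - cmat_scale ?y H) = (\<Sum>l\<in>S. cmat_scale (1 / (1 - ?y * l)) (P l))"
    using res nz by (rule eigen_resolution_resolvent)
  have shift: "complex_of_real (exp (- t)) * exp (\<i> * complex_of_real (t * s) * l)
      = exp (of_real t * (- 1 + ?y * l))" for t :: real and l
  proof -
    have "of_real t * (- 1 + ?y * l) = of_real (- t) + \<i> * complex_of_real (t * s) * l"
      by (simp add: algebra_simps)
    then show ?thesis
      by (simp only: exp_add exp_of_real)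
  qed
  have integrand: "complex_of_real (exp (- t)) * mat_exp (cmat_scale (\<i> * complex_of_real (t * s)) H) $ i $ j
      = (\<Sum>l\<in>S. P l $ i $ j * exp (of_real t * (- 1 + ?y * l)))" for t :: real
    unfolding mat_exp_eigen_resolution[OF res] sum_component cmat_scale_nth sum_distrib_left
    by (intro sum.cong refl) (metis shift mult.commute mult.left_commute)
  have "- 1 / (- 1 + w) = 1 / (1 - w)" for w :: complex
    by (metis minus_diff_eq minus_divide_divide uminus_add_conv_diff)
  then have inv_entry: "matrix_inv (mat 1 - cmat_scale ?y H) $ i $ j = (\<Sum>l\<in>S. P l $ i $ j * (- 1 / (- 1 + ?y * l)))"
    unfolding inv sum_component cmat_scale_nth by (simp add: mult.commute)
  have "((\<lambda>t. \<Sum>l\<in>S. P l $ i $ j * exp (of_real t * (- 1 + ?y * l)))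
      has_integral (\<Sum>l\<in>S. P l $ i $ j * (- 1 / (- 1 + ?y * l)))) {0..}"
    using fin by (intro has_integral_sum has_integral_mult_right has_integral_cexp_to_infinity decay)
  then show ?thesis
    unfolding integrand inv_entry .
qed

theorem mainTheorem2:
  fixes H :: "complex^3^3" and s :: real
  assumes "hermitian H"
    and "trace H = 0"
    and "trace (H ** H) = 2"
  shows "1 + complex_of_real (s^2) + \<i> * complex_of_real (s^3) * det H \<noteq> 0
    \<and> invertible (mat 1 - cmat_scale (\<i> * complex_of_real s) H)
    \<and> (\<forall>i j. ((\<lambda>t. complex_of_real (exp (- t))
              * mat_exp (cmat_scale (\<i> * complex_of_real (t * s)) H) $ i $ j)
           has_integral (matrix_inv (mat 1 - cmat_scale (\<i> * complex_of_real s) H)) $ i $ j) {0..})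
    \<and> matrix_inv (mat 1 - cmat_scale (\<i> * complex_of_real s) H)
        = cmat_scale (1 / (1 + complex_of_real (s^2) + \<i> * complex_of_real (s^3) * det H))
            (cmat_scale (1 + complex_of_real (s^2)) (mat 1)
             + cmat_scale (\<i> * complex_of_real s) H
             - cmat_scale (complex_of_real (s^2)) (H ** H))
    \<and> (mat 1 + cmat_scale (\<i> * complex_of_real s) H)
        ** matrix_inv (mat 1 - cmat_scale (\<i> * complex_of_real s) H)
        = cmat_scale (1 / (1 + complex_of_real (s^2) + \<i> * complex_of_real (s^3) * det H))
            (cmat_scale (1 + complex_of_real (s^2) - \<i> * complex_of_real (s^3) * det H) (mat 1)
             + cmat_scale (2 * \<i> * complex_of_real s) H
             - cmat_scale (2 * complex_of_real (s^2)) (H ** H))"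
proof -
  let ?y = "\<i> * complex_of_real s"
  define D where "D = 1 + complex_of_real (s^2) + \<i> * complex_of_real (s^3) * det H"
  define R where "R = cmat_scale (1 + complex_of_real (s^2)) (mat 1) + cmat_scale ?y H
    - cmat_scale (complex_of_real (s^2)) (H ** H)"
  obtain \<delta> where \<delta>: "det H = of_real \<delta>"
    using hermitian_det_real[OF assms(1)] by (auto elim: Reals_cases)
  have cubic: "H ** (H ** H) = cmat_scale (of_real 1) H + cmat_scale (of_real \<delta>) (mat 1)"
    using cayley_hamilton_traceless_3[OF assms(2)] assms(3) \<delta> by simp
  have "Re D = 1 + s\<^sup>2"
    unfolding D_def \<delta> by simp
  then have D: "D \<noteq> 0"
    using add_pos_nonneg[OF zero_less_one zero_le_power2[of s]] by auto
  have D_eq: "D = 1 - of_real 1 * ?y\<^sup>2 - of_real \<delta> * ?y ^ 3"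
    unfolding D_def \<delta> by (simp add: power2_eq_square power3_eq_cube algebra_simps)
  have R_eq: "R = cmat_scale (1 - of_real 1 * ?y\<^sup>2) (mat 1) + cmat_scale ?y H + cmat_scale (?y\<^sup>2) (H ** H)"
    unfolding R_def by (simp add: vec_eq_iff power2_eq_square algebra_simps)
  have inv: "(mat 1 - cmat_scale ?y H) ** cmat_scale (1 / D) R = mat 1"
    using D unfolding D_eq R_eq by (rule depressed_cubic_resolvent_inverse[OF cubic])
  obtain S P where res: "eigen_resolution H S P" and real: "S \<subseteq> \<real>"
    using hermitian_depressed_cubic_eigen_resolution[OF assms(1) cubic] .
  have cayley: "(mat 1 + cmat_scale ?y H) ** cmat_scale (1 / D) R = cmat_scale (1 / D)
      (cmat_scale (1 + complex_of_real (s^2) - \<i> * complex_of_real (s^3) * det H) (mat 1)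
       + cmat_scale (2 * \<i> * complex_of_real s) H - cmat_scale (2 * complex_of_real (s^2)) (H ** H))"
    unfolding cayley_transform_of_right_inverse[OF inv D]
    by (rule arg_cong[where f = "cmat_scale (1 / D)"]) (simp add: R_def D_def vec_eq_iff algebra_simps)
  note inverse = matrix_inv_eq_right_inverse[OF inv]
  show ?thesis
    unfolding D_def[symmetric] R_def[symmetric] inverse(2)
    using D inverse(1) cayley laplace_mat_exp_resolvent[OF res real, where s = s, unfolded inverse(2)]
    by blast
qed

end
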